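(* For every integer $N\ge 1$, the number of tuples $(\mu_1,\dots,\mu_4;d_1,\dots,d_4)\in P^4\times\mathbb Z^4$ with $d_1+d_2+d_3+d_4$ odd and $$14\sum_{i=1}^4|\mu_i|+14\sum_{i=1}^4\binom{d_i}{2}+d_1+3d_2+5d_3+7d_4=N$$ equals the number of tuples $(\alpha_1,\dots,\alpha_4;e_1,\dots,e_4)\in P^4\times\mathbb Z^4$ with $e_1+e_2+e_3+e_4$ odd and $$14\sum_{i=1}^4|\alpha_i|+14\sum_{i=1}^4\binom{e_i}{2}+0e_1+2e_2+4e_3+6e_4+1=N.$$
   Context: $P$ denotes the set of all integer partitions into positive parts (including the empty partition); for a partition $\lambda$, $|\lambda|$ is the sum of its parts. For $d\in\mathbb Z$, $\binom{d}{2}=d(d-1)/2$. *)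

theory Defs
  imports Main "HOL-Library.Multiset"
begin

definition partitions :: "nat multiset set" where
  "partitions = {\<mu>. \<forall>x\<in>#\<mu>. 0 < x}"

definition psize :: "nat multiset \<Rightarrow> int" where
  "psize \<mu> = int (sum_mset \<mu>)"

definition binom2 :: "int \<Rightarrow> int" where
  "binom2 d = d * (d - 1) div 2"

definition lhs_set :: "int \<Rightarrow> ((nat multiset \<times> nat multiset \<times> nat multiset \<times> nat multiset) \<times> (int \<times> int \<times> int \<times> int)) set" where
  "lhs_set N = {((m1,m2,m3,m4),(d1,d2,d3,d4)).
     m1 \<in> partitions \<and> m2 \<in> partitions \<and> m3 \<in> partitions \<and> m4 \<in> partitions \<and>
     odd (d1+d2+d3+d4) \<and>
     14*(psize m1 + psize m2 + psize m3 + psize m4)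
     + 14*(binom2 d1 + binom2 d2 + binom2 d3 + binom2 d4)
     + d1 + 3*d2 + 5*d3 + 7*d4 = N}"

definition rhs_set :: "int \<Rightarrow> ((nat multiset \<times> nat multiset \<times> nat multiset \<times> nat multiset) \<times> (int \<times> int \<times> int \<times> int)) set" where
  "rhs_set N = {((a1,a2,a3,a4),(e1,e2,e3,e4)).
     a1 \<in> partitions \<and> a2 \<in> partitions \<and> a3 \<in> partitions \<and> a4 \<in> partitions \<and>
     odd (e1+e2+e3+e4) \<and>
     14*(psize a1 + psize a2 + psize a3 + psize a4)
     + 14*(binom2 e1 + binom2 e2 + binom2 e3 + binom2 e4)
     + 0*e1 + 2*e2 + 4*e3 + 6*e4 + 1 = N}"

end

theory Submission
  imports Defs
begin

text \<open>
  For d = (d1,d2,d3,d4) with odd sum 2k+1 let the recentred vector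
  be d - k(1,1,1,1). Its coordinate sum is 1 - 2k, again odd, and recentring it shifts
  back by -k, so recentring is an involution on odd-sum vectors.
  Using binom2 (d - k) = binom2 d - k d + binom2 (k + 1), the quadratic parts change by
  exactly 14 k when d is recentred, which turns the weight d1 + 3 d2 + 5 d3 + 7 d4 into
  2 e2 + 4 e3 + 6 e4 + 1 of the recentred vector e. Hence recentring the vector part maps
  lhs_set N into rhs_set N and back, and being an involution it is a bijection between
  the two sets, so their cardinalities agree (for every N, not only N \<ge> 1).
\<close>

lemma binom2_twice: "2 * binom2 d = d * (d - 1)"
proof -
  have "even (d * (d - 1))" by simp
  then show ?thesis unfolding binom2_def by simp
qed

lemma binom2_shift: "binom2 (d - k) = binom2 d - k * d + binom2 (k + 1)"
proof -
  have "2 * binom2 (d - k) = 2 * (binom2 d - k * d + binom2 (k + 1))"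
    unfolding distrib_left right_diff_distrib binom2_twice by (simp add: algebra_simps)
  then show ?thesis by simp
qed

lemma weight_recentred:
  fixes d1 d2 d3 d4 k :: int
  assumes sum: "d1 + d2 + d3 + d4 = 2 * k + 1"
  shows "14 * (binom2 (d1 - k) + binom2 (d2 - k) + binom2 (d3 - k) + binom2 (d4 - k))
           + 0 * (d1 - k) + 2 * (d2 - k) + 4 * (d3 - k) + 6 * (d4 - k) + 1
       = 14 * (binom2 d1 + binom2 d2 + binom2 d3 + binom2 d4) + d1 + 3 * d2 + 5 * d3 + 7 * d4"
proof -
  have "binom2 (d1 - k) + binom2 (d2 - k) + binom2 (d3 - k) + binom2 (d4 - k)
      = binom2 d1 + binom2 d2 + binom2 d3 + binom2 d4 - k * (d1 + d2 + d3 + d4)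
        + 4 * binom2 (k + 1)"
    unfolding binom2_shift by (simp add: algebra_simps)
  also have "\<dots> = binom2 d1 + binom2 d2 + binom2 d3 + binom2 d4 + k"
    using sum binom2_twice[of "k + 1"] by (simp add: algebra_simps)
  finally show ?thesis using sum by simp
qed

fun recentre :: "int \<times> int \<times> int \<times> int \<Rightarrow> int \<times> int \<times> int \<times> int" where
  "recentre (d1, d2, d3, d4) =
     (let k = (d1 + d2 + d3 + d4) div 2 in (d1 - k, d2 - k, d3 - k, d4 - k))"

lemma recentre_odd:
  assumes "d1 + d2 + d3 + d4 = 2 * k + 1"
  shows "recentre (d1, d2, d3, d4) = (d1 - k, d2 - k, d3 - k, d4 - k)"
proof -
  have "(d1 + d2 + d3 + d4) div 2 = k" using assms by simp
  then show ?thesis by (simp add: Let_def)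
qed

declare recentre.simps [simp del]

lemma recentre_involution:
  assumes "odd (d1 + d2 + d3 + d4)"
  shows "recentre (recentre (d1, d2, d3, d4)) = (d1, d2, d3, d4)"
proof -
  obtain k where k: "d1 + d2 + d3 + d4 = 2 * k + 1" using assms oddE by blast
  then have "(d1 - k) + (d2 - k) + (d3 - k) + (d4 - k) = 2 * (- k) + 1" by simp
  from recentre_odd[OF this] show ?thesis using recentre_odd[OF k] by simp
qed

lemma recentre_lhs_to_rhs:
  assumes "((m1, m2, m3, m4), (d1, d2, d3, d4)) \<in> lhs_set N"
  shows "((m1, m2, m3, m4), recentre (d1, d2, d3, d4)) \<in> rhs_set N"
proof -
  have odd: "odd (d1 + d2 + d3 + d4)" and parts: "m1 \<in> partitions" "m2 \<in> partitions"
      "m3 \<in> partitions" "m4 \<in> partitions"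
    and weight: "14 * (psize m1 + psize m2 + psize m3 + psize m4)
      + 14 * (binom2 d1 + binom2 d2 + binom2 d3 + binom2 d4)
      + d1 + 3 * d2 + 5 * d3 + 7 * d4 = N"
    using assms unfolding lhs_set_def by auto
  obtain k where k: "d1 + d2 + d3 + d4 = 2 * k + 1" using odd oddE by blast
  have "odd ((d1 - k) + (d2 - k) + (d3 - k) + (d4 - k))" using k by presburger
  then show ?thesis
    using parts weight weight_recentred[OF k] unfolding recentre_odd[OF k] rhs_set_def
    by (simp del: odd_add even_add)
qed

lemma recentre_rhs_to_lhs:
  assumes "((a1, a2, a3, a4), (e1, e2, e3, e4)) \<in> rhs_set N"
  shows "((a1, a2, a3, a4), recentre (e1, e2, e3, e4)) \<in> lhs_set N"
proof -
  have odd: "odd (e1 + e2 + e3 + e4)" and parts: "a1 \<in> partitions" "a2 \<in> partitions"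
      "a3 \<in> partitions" "a4 \<in> partitions"
    and weight: "14 * (psize a1 + psize a2 + psize a3 + psize a4)
      + 14 * (binom2 e1 + binom2 e2 + binom2 e3 + binom2 e4)
      + 0 * e1 + 2 * e2 + 4 * e3 + 6 * e4 + 1 = N"
    using assms unfolding rhs_set_def by auto
  obtain j where j: "e1 + e2 + e3 + e4 = 2 * j + 1" using odd oddE by blast
  have recentred_sum: "(e1 - j) + (e2 - j) + (e3 - j) + (e4 - j) = 2 * (- j) + 1"
    using j by simp
  then have "odd ((e1 - j) + (e2 - j) + (e3 - j) + (e4 - j))" by presburger
  then show ?thesis
    using parts weight weight_recentred[OF recentred_sum]
    unfolding recentre_odd[OF j] lhs_set_def by (simp del: odd_add even_add)
qed

lemma pair_of_quadruples_cases:
  obtains m1 m2 m3 m4 d1 d2 d3 d4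
  where "x = ((m1 :: 'a, m2 :: 'b, m3 :: 'c, m4 :: 'd), (d1 :: 'e, d2 :: 'f, d3 :: 'g, d4 :: 'h))"
  by (metis prod.exhaust)

lemma recentre_involution_on_sets:
  assumes "x \<in> lhs_set N \<union> rhs_set N"
  shows "apsnd recentre (apsnd recentre x) = x"
proof (cases x rule: pair_of_quadruples_cases)
  case (1 m1 m2 m3 m4 d1 d2 d3 d4)
  have "odd (d1 + d2 + d3 + d4)"
    using assms unfolding 1 lhs_set_def rhs_set_def Un_iff mem_Collect_eq case_prod_conv
    by (elim disjE conjE)
  then show ?thesis unfolding 1 using recentre_involution by simp
qed

theorem lemma3p1:
  fixes N :: int
  assumes "N \<ge> 1"
  shows "card (lhs_set N) = card (rhs_set N)"
proof -
  let ?f = "apsnd recentre"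
  have "bij_betw ?f (lhs_set N) (rhs_set N)"
  proof (rule bij_betw_byWitness[where f' = ?f])
    show "?f ` lhs_set N \<subseteq> rhs_set N"
    proof (rule image_subsetI)
      fix x assume "x \<in> lhs_set N"
      then show "?f x \<in> rhs_set N"
        by (cases x rule: pair_of_quadruples_cases) (simp add: recentre_lhs_to_rhs)
    qed
    show "?f ` rhs_set N \<subseteq> lhs_set N"
    proof (rule image_subsetI)
      fix x assume "x \<in> rhs_set N"
      then show "?f x \<in> lhs_set N"
        by (cases x rule: pair_of_quadruples_cases) (simp add: recentre_rhs_to_lhs)
    qed
  qed (use recentre_involution_on_sets in blast)+
  then show ?thesis by (rule bij_betw_same_card)
qed

end
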